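(* (A weighted, repeated argument sum simplification.) For complex numbers $x_0,\dots,x_q$ (repetitions allowed), $q\ge0$, and $\tau\in\mathbb{R}$, $$\sum_{j=0}^q x_j\,e^{-\tau[x_0,\ldots,x_q,x_j]}=\Big(\tau\frac{\partial}{\partial\tau}-q\Big)e^{-\tau[x_0,\ldots,x_q]}.$$
   Context: For $t\in\mathbb{R}$ and numbers $y_0,\dots,y_p$ (repetitions allowed), $e^{t[y_0,\ldots,y_p]}$ denotes the divided difference of $f(x)=e^{tx}$, $f[y_0,\ldots,y_p]=\frac{1}{2\pi i}\oint_\Gamma\frac{f(x)}{\prod_{i=0}^p(x-y_i)}\,\mathrm{d}x$, $\Gamma$ a positively oriented contour enclosing all $y_i$. The multiset $[x_0,\ldots,x_q,x_j]$ contains $x_j$ twice. *)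

theory Defs
  imports "HOL-Complex_Analysis.Complex_Analysis"
begin

text \<open>Divided difference of f(x) = exp(t x) at the (multi)list of nodes ys, defined by
  the contour integral (1/(2 pi i)) \<ointegral> f(z) / \<Prod>(z - y_i) dz over a positively oriented
  circle enclosing all nodes (radius 1 + sum of the moduli of the nodes).\<close>
definition exp_divdiff :: "real \<Rightarrow> complex list \<Rightarrow> complex" where
  "exp_divdiff t ys =
     contour_integral (circlepath 0 (1 + (\<Sum>y\<leftarrow>ys. norm y)))
       (\<lambda>z. exp (complex_of_real t * z) / (\<Prod>y\<leftarrow>ys. (z - y))) / (2 * complex_of_real pi * \<i>)"

end

theory Submission
  imports Defs
begin

(* Let P(z) be the product of the z - y over the n nodes ys and E(z) = exp (t z). All divided
   differences involved are contour integrals over one circle enclosing the nodes. Since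
   y/(z - y) = z/(z - y) - 1, the integrand of the left-hand side is E/P (z P'/P - n), and the
   quotient rule for z E/P turns this into t z E/P - (n - 1) E/P - (z E/P)'. The exact term
   integrates to zero around the circle, while differentiation under the integral sign shows
   that t z E/P integrates to t d/dt e^{t[ys]}. Finally t d/dt = tau d/dtau for t = -tau. *)

lemma contour_integral_circlepath_radius_eq:
  fixes K :: "complex set"
  assumes "finite K" and "f holomorphic_on - K"
    and "\<And>y. y \<in> K \<Longrightarrow> norm y < r" and "\<And>y. y \<in> K \<Longrightarrow> norm y < r'"
    and "0 < r" and "0 < r'"
  shows "contour_integral (circlepath 0 r) f = contour_integral (circlepath 0 r') f"
proof -
  have "contour_integral (circlepath 0 R') f = contour_integral (circlepath 0 R) f"
    if K_inside: "\<And>y. y \<in> K \<Longrightarrow> norm y < R" and "0 < R" "R \<le> R'" for R R'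
  proof (rule Cauchy_theorem_homotopic_loops[where S = "- K"])
    show "open (- K)"
      using \<open>finite K\<close> by (simp add: finite_imp_closed open_Compl)
    show "homotopic_loops (- K) (circlepath 0 R') (circlepath 0 R)"
    proof (rule homotopic_loops_linear)
      fix s :: real
      define e where "e = exp (2 * of_real pi * \<i> * of_real s)"
      have "norm e = 1"
        by (simp add: e_def)
      show "closed_segment (circlepath 0 R' s) (circlepath 0 R s) \<subseteq> - K"
      proof
        fix w assume "w \<in> closed_segment (circlepath 0 R' s) (circlepath 0 R s)"
        then obtain u where u: "0 \<le> u" "u \<le> 1"
          and "w = of_real ((1 - u) * R' + u * R) * e"
          by (auto simp: closed_segment_def circlepath e_def scaleR_conv_of_real algebra_simps)
        then have "norm w = (1 - u) * R' + u * R"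
          using \<open>norm e = 1\<close> u \<open>0 < R\<close> \<open>R \<le> R'\<close>
          by (simp only: norm_mult norm_of_real) simp
        also have "\<dots> \<ge> R"
          using u \<open>R \<le> R'\<close> mult_left_mono[of R R' "1 - u"] by (simp add: algebra_simps)
        finally show "w \<in> - K"
          using K_inside by force
      qed
    qed auto
  qed (use assms in auto)
  then show ?thesis
    using assms by (metis linear)
qed

lemma holomorphic_on_prod_list_sub: "(\<lambda>z. \<Prod>y\<leftarrow>ys. z - y) holomorphic_on S"
  by (induction ys) (auto intro!: holomorphic_intros)

lemma has_field_derivative_prod_list_sub:
  fixes z :: "'a :: real_normed_field"
  assumes "z \<notin> set ys"
  shows "((\<lambda>z. \<Prod>y\<leftarrow>ys. z - y) has_field_derivative
           (\<Prod>y\<leftarrow>ys. z - y) * (\<Sum>y\<leftarrow>ys. 1 / (z - y))) (at z)"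
  using assms
proof (induction ys)
  case Nil
  then show ?case by simp
next
  case (Cons a ys)
  then have "z - a \<noteq> 0" by simp
  have "((\<lambda>z. (z - a) * (\<Prod>y\<leftarrow>ys. z - y)) has_field_derivative
          1 * (\<Prod>y\<leftarrow>ys. z - y) + (z - a) * ((\<Prod>y\<leftarrow>ys. z - y) * (\<Sum>y\<leftarrow>ys. 1 / (z - y)))) (at z)"
    using Cons by (intro DERIV_mult derivative_eq_intros) auto
  moreover have "1 * (\<Prod>y\<leftarrow>ys. z - y) + (z - a) * ((\<Prod>y\<leftarrow>ys. z - y) * (\<Sum>y\<leftarrow>ys. 1 / (z - y)))
      = ((z - a) * (\<Prod>y\<leftarrow>ys. z - y)) * (1 / (z - a) + (\<Sum>y\<leftarrow>ys. 1 / (z - y)))"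
    using \<open>z - a \<noteq> 0\<close> by (simp add: field_simps)
  ultimately show ?case
    by simp
qed

lemma sum_list_div_sub:
  fixes z :: "'a :: field"
  assumes "z \<notin> set ys"
  shows "(\<Sum>y\<leftarrow>ys. y / (z - y)) = z * (\<Sum>y\<leftarrow>ys. 1 / (z - y)) - of_nat (length ys)"
  using assms
proof (induction ys)
  case (Cons a ys)
  then have "a / (z - a) = z * (1 / (z - a)) - 1"
    by (simp add: field_simps)
  with Cons have "(\<Sum>y\<leftarrow>a # ys. y / (z - y))
      = (z * (1 / (z - a)) - 1) + (z * (\<Sum>y\<leftarrow>ys. 1 / (z - y)) - of_nat (length ys))"
    by simp
  then show ?case
    by (simp add: algebra_simps)
qed simp

lemma has_contour_integral_sum_list:
  assumes "\<And>y. y \<in> set ys \<Longrightarrow> (f y has_contour_integral i y) g"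
  shows "((\<lambda>z. \<Sum>y\<leftarrow>ys. f y z) has_contour_integral (\<Sum>y\<leftarrow>ys. i y)) g"
  using assms by (induction ys) (auto intro: has_contour_integral_0 has_contour_integral_add)

lemma path_image_circlepath_subset_Compl:
  assumes "\<And>y. y \<in> K \<Longrightarrow> norm y < r"
  shows "path_image (circlepath 0 r) \<subseteq> - K"
  using assms by (force simp: path_image_circlepath_minus path_image_circlepath_nonneg)

lemma contour_integrable_circlepath_around_singularities:
  fixes K :: "complex set"
  assumes "finite K" and "f holomorphic_on - K" and "\<And>y. y \<in> K \<Longrightarrow> norm y < r"
  shows "f contour_integrable_on circlepath 0 r"
proof (rule contour_integrable_holomorphic_simple[OF \<open>f holomorphic_on - K\<close>])
  show "open (- K)"
    using \<open>finite K\<close> by (simp add: finite_imp_closed open_Compl)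
  show "path_image (circlepath 0 r) \<subseteq> - K"
    using assms(3) by (rule path_image_circlepath_subset_Compl)
qed simp

lemma has_vector_derivative_contour_integral_circlepath_exp:
  fixes g :: "complex \<Rightarrow> complex"
  assumes "continuous_on (path_image (circlepath c r)) g"
  shows "((\<lambda>t. contour_integral (circlepath c r) (\<lambda>z. exp (of_real t * z) * g z))
           has_vector_derivative
             contour_integral (circlepath c r) (\<lambda>z. z * exp (of_real t * z) * g z)) (at t)"
proof -
  define \<gamma> where "\<gamma> = circlepath c r"
  define d where "d s = vector_derivative \<gamma> (at s)" for s
  have d_cont: "continuous_on A d" for A
    unfolding d_def \<gamma>_def vector_derivative_circlepath by (intro continuous_intros)
  have \<gamma>_cont: "continuous_on A \<gamma>" for A
    unfolding \<gamma>_def circlepath by (intro continuous_intros)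
  have g\<gamma>_cont: "continuous_on {0..1} (\<lambda>s. g (\<gamma> s))"
    using continuous_on_compose[OF \<gamma>_cont, of "{0..1}" g] assms
    by (simp add: \<gamma>_def path_image_def o_def)
  have snd_cont: "continuous_on (UNIV \<times> {0..1}) (\<lambda>p. h (snd p))"
    if "continuous_on {0..1} h" for h :: "real \<Rightarrow> complex"
    by (rule continuous_on_compose2[OF that]) (auto intro: continuous_intros)
  have "((\<lambda>t. integral (cbox 0 1) (\<lambda>s. exp (of_real t * \<gamma> s) * g (\<gamma> s) * d s))
          has_vector_derivative
            integral (cbox 0 1) (\<lambda>s. \<gamma> s * exp (of_real t * \<gamma> s) * g (\<gamma> s) * d s)) (at t within UNIV)"
  proof (rule leibniz_rule_vector_derivative)
    fix t s :: real
    have "((\<lambda>w. exp (w * \<gamma> s) * g (\<gamma> s) * d s) has_field_derivative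
            \<gamma> s * exp (of_real t * \<gamma> s) * g (\<gamma> s) * d s) (at (of_real t))"
      by (auto intro!: derivative_eq_intros)
    from has_vector_derivative_real_field[OF this]
    show "((\<lambda>t. exp (of_real t * \<gamma> s) * g (\<gamma> s) * d s) has_vector_derivative
            \<gamma> s * exp (of_real t * \<gamma> s) * g (\<gamma> s) * d s) (at t within UNIV)"
      by simp
  next
    fix t :: real
    have "continuous_on {0..1} (\<lambda>s. exp (of_real t * \<gamma> s) * g (\<gamma> s) * d s)"
      by (intro continuous_intros \<gamma>_cont g\<gamma>_cont d_cont)
    then show "(\<lambda>s. exp (of_real t * \<gamma> s) * g (\<gamma> s) * d s) integrable_on cbox 0 1"
      by (simp add: integrable_continuous_real)
  next
    show "continuous_on (UNIV \<times> cbox 0 1)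
            (\<lambda>(t, s). \<gamma> s * exp (of_real t * \<gamma> s) * g (\<gamma> s) * d s)"
      unfolding case_prod_beta cbox_interval
      by (intro continuous_intros snd_cont g\<gamma>_cont \<gamma>_cont d_cont)
  qed auto
  then show ?thesis
    by (simp add: contour_integral_integral d_def flip: \<gamma>_def)
qed

lemma holomorphic_on_exp_div_prod_list:
  "(\<lambda>z. exp (of_real t * z) / (\<Prod>y\<leftarrow>ys. z - y)) holomorphic_on - set ys"
  by (intro holomorphic_intros holomorphic_on_prod_list_sub) (auto simp: prod_list_zero_iff)

lemma one_plus_sum_list_norm_pos: "0 < 1 + (\<Sum>w\<leftarrow>ws. norm w)"
proof -
  have "0 \<le> (\<Sum>w\<leftarrow>ws. norm w)"
    by (induction ws) auto
  then show ?thesis by simp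
qed

lemma norm_less_one_plus_sum_list_norm:
  assumes "y \<in> set ws"
  shows "norm y < 1 + (\<Sum>w\<leftarrow>ws. norm w)"
proof -
  have "norm y \<le> (\<Sum>w\<leftarrow>ws. norm w)"
    using assms by (intro member_le_sum_list) auto
  then show ?thesis by simp
qed

(* The radius in the definition of exp_divdiff depends on the nodes; freeing it lets ys and
   ys @ [y] be integrated over the same circle. *)
lemma exp_divdiff_circlepath:
  assumes "\<And>y. y \<in> set ys \<Longrightarrow> norm y < r" and "0 < r"
  shows "exp_divdiff t ys = contour_integral (circlepath 0 r)
           (\<lambda>z. exp (of_real t * z) / (\<Prod>y\<leftarrow>ys. z - y)) / (2 * of_real pi * \<i>)"
  unfolding exp_divdiff_def using assms
  by (subst contour_integral_circlepath_radius_eq[where K = "set ys" and r' = r])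
    (auto intro: holomorphic_on_exp_div_prod_list norm_less_one_plus_sum_list_norm
      one_plus_sum_list_norm_pos)

lemma has_contour_integral_exp_divdiff:
  assumes "\<And>y. y \<in> set ys \<Longrightarrow> norm y < r" and "0 < r"
  shows "((\<lambda>z. exp (of_real t * z) / (\<Prod>y\<leftarrow>ys. z - y)) has_contour_integral
           2 * of_real pi * \<i> * exp_divdiff t ys) (circlepath 0 r)"
proof -
  have "(\<lambda>z. exp (of_real t * z) / (\<Prod>y\<leftarrow>ys. z - y)) contour_integrable_on circlepath 0 r"
    by (intro contour_integrable_circlepath_around_singularities[where K = "set ys"]
        holomorphic_on_exp_div_prod_list) (use assms in auto)
  then show ?thesis
    by (simp add: exp_divdiff_circlepath[OF assms] has_contour_integral_integral)
qed

lemma has_vector_derivative_exp_divdiff: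
  assumes "\<And>y. y \<in> set ys \<Longrightarrow> norm y < r" and "0 < r"
  shows "((\<lambda>t. exp_divdiff t ys) has_vector_derivative
           contour_integral (circlepath 0 r) (\<lambda>z. z * exp (of_real t * z) / (\<Prod>y\<leftarrow>ys. z - y))
             / (2 * of_real pi * \<i>)) (at t)"
proof -
  have "(\<Prod>y\<leftarrow>ys. z - y) \<noteq> 0" if "z \<in> path_image (circlepath 0 r)" for z
    using path_image_circlepath_subset_Compl[of "set ys", OF assms(1)] that by (auto simp: prod_list_zero_iff)
  then have "continuous_on (path_image (circlepath 0 r)) (\<lambda>z. 1 / (\<Prod>y\<leftarrow>ys. z - y))"
    by (intro continuous_intros holomorphic_on_imp_continuous_on[OF holomorphic_on_prod_list_sub])
      auto
  from has_vector_derivative_divide[OF has_vector_derivative_contour_integral_circlepath_exp[OF this]]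
  show ?thesis
    by (simp add: exp_divdiff_circlepath[OF assms])
qed

lemma has_contour_integral_vector_derivative_exp_divdiff:
  assumes "\<And>y. y \<in> set ys \<Longrightarrow> norm y < r" and "0 < r"
  shows "((\<lambda>z. z * exp (of_real t * z) / (\<Prod>y\<leftarrow>ys. z - y)) has_contour_integral
           2 * of_real pi * \<i> * vector_derivative (\<lambda>t. exp_divdiff t ys) (at t)) (circlepath 0 r)"
proof -
  have "(\<lambda>z. z * exp (of_real t * z) / (\<Prod>y\<leftarrow>ys. z - y)) contour_integrable_on circlepath 0 r"
    using assms(1)
    by (intro contour_integrable_circlepath_around_singularities[where K = "set ys"]
        holomorphic_intros holomorphic_on_prod_list_sub) (auto simp: prod_list_zero_iff)
  then show ?thesis
    using vector_derivative_at[OF has_vector_derivative_exp_divdiff[OF assms]]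
    by (simp add: has_contour_integral_integral)
qed

lemma has_field_derivative_mult_exp_div_prod_list:
  fixes ys :: "complex list" and t :: real
  assumes "z \<notin> set ys"
  shows "((\<lambda>z. z * exp (of_real t * z) / (\<Prod>w\<leftarrow>ys. z - w)) has_field_derivative
           of_real t * (z * exp (of_real t * z) / (\<Prod>w\<leftarrow>ys. z - w))
           - (of_nat (length ys) - 1) * (exp (of_real t * z) / (\<Prod>w\<leftarrow>ys. z - w))
           - (\<Sum>y\<leftarrow>ys. y * (exp (of_real t * z) / (\<Prod>w\<leftarrow>ys @ [y]. z - w)))) (at z)"
proof -
  define E where "E = exp (of_real t * z)"
  define P where "P = (\<Prod>w\<leftarrow>ys. z - w)"
  define S where "S = (\<Sum>w\<leftarrow>ys. 1 / (z - w))"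
  have "P \<noteq> 0"
    using assms by (auto simp: P_def prod_list_zero_iff)
  have deriv: "((\<lambda>z. z * exp (of_real t * z) / (\<Prod>w\<leftarrow>ys. z - w)) has_field_derivative
                 ((1 * E + z * (of_real t * E)) * P - z * E * (P * S)) / (P * P)) (at z)"
    using \<open>P \<noteq> 0\<close> assms unfolding E_def P_def S_def
    by (intro DERIV_divide DERIV_mult derivative_eq_intros has_field_derivative_prod_list_sub) auto
  have "(\<Sum>y\<leftarrow>ys. y * (E / (\<Prod>w\<leftarrow>ys @ [y]. z - w))) = E / P * (\<Sum>y\<leftarrow>ys. y / (z - y))"
    by (simp add: P_def mult.commute flip: sum_list_const_mult)
  also have "\<dots> = E / P * (z * S - of_nat (length ys))"
    by (simp add: S_def sum_list_div_sub[OF assms])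
  finally have "((1 * E + z * (of_real t * E)) * P - z * E * (P * S)) / (P * P)
      = of_real t * (z * E / P) - (of_nat (length ys) - 1) * (E / P)
        - (\<Sum>y\<leftarrow>ys. y * (E / (\<Prod>w\<leftarrow>ys @ [y]. z - w)))"
    using \<open>P \<noteq> 0\<close> by (simp add: field_simps)
  with deriv show ?thesis
    unfolding E_def P_def by simp
qed

theorem sum_mult_exp_divdiff_append:
  fixes ys :: "complex list" and t :: real
  shows "(\<Sum>y\<leftarrow>ys. y * exp_divdiff t (ys @ [y]))
       = of_real t * vector_derivative (\<lambda>t. exp_divdiff t ys) (at t)
         - (of_nat (length ys) - 1) * exp_divdiff t ys"
proof -
  define r where "r = 1 + (\<Sum>y\<leftarrow>ys. norm y)"
  define c where "c = 2 * complex_of_real pi * \<i>"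
  define D' where "D' = vector_derivative (\<lambda>t. exp_divdiff t ys) (at t)"
  define F where "F z = of_real t * (z * exp (of_real t * z) / (\<Prod>w\<leftarrow>ys. z - w))
    - (of_nat (length ys) - 1) * (exp (of_real t * z) / (\<Prod>w\<leftarrow>ys. z - w))
    - (\<Sum>y\<leftarrow>ys. y * (exp (of_real t * z) / (\<Prod>w\<leftarrow>ys @ [y]. z - w)))" for z
  have nodes: "norm y < r" if "y \<in> set ys" for y
    using that by (simp add: r_def norm_less_one_plus_sum_list_norm)
  have "0 < r"
    by (simp add: r_def one_plus_sum_list_norm_pos)
  have "(F has_contour_integral
          of_real t * (c * D') - (of_nat (length ys) - 1) * (c * exp_divdiff t ys)
          - (\<Sum>y\<leftarrow>ys. y * (c * exp_divdiff t (ys @ [y])))) (circlepath 0 r)"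
    unfolding F_def c_def D'_def using nodes \<open>0 < r\<close>
    by (intro has_contour_integral_diff has_contour_integral_lmul has_contour_integral_sum_list
        has_contour_integral_exp_divdiff has_contour_integral_vector_derivative_exp_divdiff) auto
  moreover have "(F has_contour_integral 0) (circlepath 0 r)"
  proof (rule Cauchy_theorem_primitive[where S = "- set ys"])
    fix z assume "z \<in> - set ys"
    then show "((\<lambda>z. z * exp (of_real t * z) / (\<Prod>w\<leftarrow>ys. z - w)) has_field_derivative F z)
                 (at z within - set ys)"
      using has_field_derivative_mult_exp_div_prod_list[of z ys t]
      by (auto simp: F_def intro: has_field_derivative_at_within)
  qed (use path_image_circlepath_subset_Compl[of "set ys", OF nodes] in auto)
  ultimately have "c * (of_real t * D' - (of_nat (length ys) - 1) * exp_divdiff t ys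
                        - (\<Sum>y\<leftarrow>ys. y * exp_divdiff t (ys @ [y]))) = 0"
    using has_contour_integral_unique
    by (fastforce simp: right_diff_distrib mult.left_commute[of _ c] sum_list_const_mult)
  moreover have "c \<noteq> 0"
    by (simp add: c_def)
  ultimately show ?thesis
    by (simp add: D'_def)
qed

lemma vector_derivative_exp_divdiff_uminus:
  "vector_derivative (\<lambda>s. exp_divdiff (- s) ys) (at \<tau>)
     = - vector_derivative (\<lambda>t. exp_divdiff t ys) (at (- \<tau>))"
proof -
  have "(\<lambda>t. exp_divdiff t ys) differentiable at (- \<tau>)"
    using has_vector_derivative_exp_divdiff[OF norm_less_one_plus_sum_list_norm one_plus_sum_list_norm_pos]
    by (rule differentiableI_vector)
  then have "((\<lambda>t. exp_divdiff t ys) has_vector_derivative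
               vector_derivative (\<lambda>t. exp_divdiff t ys) (at (- \<tau>))) (at (- \<tau>))"
    by (rule vector_derivative_works[THEN iffD1])
  from vector_diff_chain_at[OF has_vector_derivative_minus[OF has_vector_derivative_id] this]
  show ?thesis
    by (simp add: o_def vector_derivative_at)
qed

theorem lemma2:
  fixes x :: "nat \<Rightarrow> complex" and q :: nat and \<tau> :: real
  shows "(\<Sum>j\<le>q. x j * exp_divdiff (- \<tau>) (map x [0..<Suc q] @ [x j]))
       = complex_of_real \<tau> * vector_derivative (\<lambda>s. exp_divdiff (- s) (map x [0..<Suc q])) (at \<tau>)
         - of_nat q * exp_divdiff (- \<tau>) (map x [0..<Suc q])"
proof -
  define ys where "ys = map x [0..<Suc q]"
  have "length ys = Suc q"
    by (simp add: ys_def)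
  have "(\<Sum>j\<le>q. x j * exp_divdiff (- \<tau>) (ys @ [x j]))
      = (\<Sum>y\<leftarrow>ys. y * exp_divdiff (- \<tau>) (ys @ [y]))"
    by (simp only: ys_def map_map o_def interv_sum_list_conv_sum_set_nat set_upt
        atLeast0LessThan lessThan_Suc_atMost)
  also have "\<dots> = complex_of_real \<tau> * vector_derivative (\<lambda>s. exp_divdiff (- s) ys) (at \<tau>)
                   - of_nat q * exp_divdiff (- \<tau>) ys"
    by (simp add: sum_mult_exp_divdiff_append vector_derivative_exp_divdiff_uminus
        \<open>length ys = Suc q\<close>)
  finally show ?thesis
    by (simp add: ys_def)
qed

end
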